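(* Let $f:M\to\mathbb{R}^3$ be an immersion with eq\"uiaffine transversal vector field $\xi$ and positive definite induced bilinear form $h$, let $(u,v)$ be isothermal coordinates centered at an umbilical point $(0,0)$ of order $\ge k$, with $\lambda_0=b_{11}(0,0)=b_{22}(0,0)\neq0$, and set $q_0=f(0,0)+\lambda_0^{-1}\xi(0,0)$. Let $\nu$ be the co-normal, $p=\nu\cdot(f-q_0)$, $\mathcal{P}=(p_{uu}-p_{vv},2p_{uv})$ and $\mathcal{B}=(b_{11}-b_{22},2b_{12})$. Then $$J_k\mathcal{P}=\lambda_0^{-1}\delta_0\,J_k\mathcal{B},$$ where $J_k$ denotes the $k$-jet at $(0,0)$ and $\delta_0=\delta(0,0)$ with $\delta=[f_u,f_v,\xi][\nu,\nu_u,\nu_v]/\rho$.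
   Context: $D$ is the flat connection of $\mathbb{R}^3$; $h$ and the shape operator $B$ are defined by $D_Xf_*Y=f_*(\nabla_XY)+h(X,Y)\xi$, $D_X\xi=-f_*(BX)+\tau(X)\xi$, eq\"uiaffine meaning $\tau=0$. Isothermal coordinates: $h(\partial_u,\partial_u)=h(\partial_v,\partial_v)=\rho$, $h(\partial_u,\partial_v)=0$. The matrix of $B$ is given by $\xi_u=-b_{11}f_u-b_{21}f_v$, $\xi_v=-b_{12}f_u-b_{22}f_v$ (with $b_{12}=b_{21}$). Umbilical: $B$ a multiple of the identity; order $\ge k$ means the $(k-1)$-jet of $\mathcal{B}$ at $(0,0)$ vanishes. The co-normal $\nu$ satisfies $\nu\cdot f_u=\nu\cdot f_v=0$, $\nu\cdot\xi=1$; $[a,b,c]$ is the determinant of three vectors. *)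

theory Defs
  imports "HOL-Analysis.Analysis"
begin

definition pd :: "bool \<Rightarrow> (real \<times> real \<Rightarrow> 'a::real_normed_vector) \<Rightarrow> real \<times> real \<Rightarrow> 'a" where
  "pd b g z = (if b then vector_derivative (\<lambda>t. g (fst z, t)) (at (snd z))
               else vector_derivative (\<lambda>s. g (s, snd z)) (at (fst z)))"

abbreviation du where "du \<equiv> pd False"
abbreviation dv where "dv \<equiv> pd True"

text \<open>Iterated partial derivatives, innermost derivative last in the list.\<close>
fun pds :: "bool list \<Rightarrow> (real \<times> real \<Rightarrow> 'a::real_normed_vector) \<Rightarrow> real \<times> real \<Rightarrow> 'a" where
  "pds [] g = g"
| "pds (b # bs) g = pd b (pds bs g)"

definition smooth2_on :: "(real \<times> real) set \<Rightarrow> (real \<times> real \<Rightarrow> 'a::real_normed_vector) \<Rightarrow> bool" where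
  "smooth2_on U g \<longleftrightarrow> (\<forall>bs. continuous_on U (pds bs g) \<and> (\<forall>z\<in>U. pds bs g differentiable (at z)))"

definition jet_eq :: "real \<times> real \<Rightarrow> nat \<Rightarrow> (real \<times> real \<Rightarrow> 'a::real_normed_vector) \<Rightarrow> (real \<times> real \<Rightarrow> 'a) \<Rightarrow> bool" where
  "jet_eq z k g h \<longleftrightarrow> (\<forall>i j. i + j \<le> k \<longrightarrow>
      pds (replicate i False @ replicate j True) g z = pds (replicate i False @ replicate j True) h z)"

definition bracket3 :: "real^3 \<Rightarrow> real^3 \<Rightarrow> real^3 \<Rightarrow> real" where
  "bracket3 a b c = a \<bullet> cross3 b c"

end

theory Submission
  imports Defs
begin

text \<open>Differentiating the defining relations of the co-normal gives
  \<open>\<nu>\<^sub>u \<cdot> f\<^sub>u = \<nu>\<^sub>v \<cdot> f\<^sub>v = -\<rho>\<close> and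
  \<open>\<nu>\<^sub>u \<cdot> f\<^sub>v = \<nu>\<^sub>v \<cdot> f\<^sub>u = \<nu>\<^sub>u \<cdot> \<xi> = \<nu>\<^sub>v \<cdot> \<xi> = 0\<close>, so
  \<open>\<nu>, \<nu>\<^sub>u, \<nu>\<^sub>v\<close> are multiples of the dual basis of \<open>f\<^sub>u, f\<^sub>v, \<xi>\<close> and
  \<open>\<delta> = \<rho>\<close> identically. Writing \<open>f - q\<^sub>0 = F - \<xi> / \<lambda>\<^sub>0\<close> with
  \<open>F = f + \<xi> / \<lambda>\<^sub>0 - q\<^sub>0\<close> and using \<open>\<nu>\<^sub>u\<^sub>u \<cdot> \<xi> = -b\<^sub>1\<^sub>1 \<rho>\<close>
  and its analogues, one finds
  \<open>\<P> - (\<rho>\<^sub>0 / \<lambda>\<^sub>0) \<B> = ((\<nu>\<^sub>u\<^sub>u - \<nu>\<^sub>v\<^sub>v) \<cdot> F, 2 \<nu>\<^sub>u\<^sub>v \<cdot> F)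
    + ((\<rho> - \<rho>\<^sub>0) / \<lambda>\<^sub>0) \<B>\<close>.
  The Codazzi equations, i.e. \<open>\<xi>\<^sub>u\<^sub>v = \<xi>\<^sub>v\<^sub>u\<close>, express
  \<open>(b\<^sub>1\<^sub>1)\<^sub>v - (b\<^sub>1\<^sub>2)\<^sub>u\<close> and \<open>(b\<^sub>2\<^sub>2)\<^sub>u - (b\<^sub>1\<^sub>2)\<^sub>v\<close>
  as combinations of \<open>b\<^sub>1\<^sub>1 - b\<^sub>2\<^sub>2\<close> and \<open>b\<^sub>1\<^sub>2\<close>. Hence, if \<open>\<B>\<close>
  vanishes to order \<open>k\<close> at the umbilic, so do \<open>b\<^sub>1\<^sub>1 - \<lambda>\<^sub>0\<close> and
  \<open>b\<^sub>2\<^sub>2 - \<lambda>\<^sub>0\<close>; as \<open>F\<^sub>u\<close> and \<open>F\<^sub>v\<close> are combinations of these and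
  \<open>b\<^sub>1\<^sub>2\<close>, \<open>F\<close> vanishes to order \<open>k + 1\<close>, and then so does the right-hand side
  above, which is the claimed equality of \<open>k\<close>-jets.\<close>

definition coord_line :: "bool \<Rightarrow> real \<times> real \<Rightarrow> real \<Rightarrow> real \<times> real" where
  "coord_line b z t = (if b then (fst z, t) else (t, snd z))"

definition coord :: "bool \<Rightarrow> real \<times> real \<Rightarrow> real" where
  "coord b z = (if b then snd z else fst z)"

lemma pd_coord_line: "pd b g z = vector_derivative (\<lambda>t. g (coord_line b z t)) (at (coord b z))"
  by (simp add: pd_def coord_line_def coord_def)

lemma coord_line_coord [simp]: "coord_line b z (coord b z) = z"
  by (simp add: coord_line_def coord_def)

lemma coord_line_affine: "coord_line b z = (\<lambda>t. coord_line b z 0 + t *\<^sub>R coord_line b 0 1)"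
  by (auto simp: coord_line_def fun_eq_iff)

lemma coord_line_differentiable: "coord_line b z differentiable (at t)"
  by (subst coord_line_affine) (auto intro!: derivative_intros)

lemma continuous_on_coord_line: "continuous_on S (coord_line b z)"
  by (subst coord_line_affine) (auto intro!: continuous_intros)

lemma pd_has_vector_derivative:
  assumes "g differentiable (at z)"
  shows "((\<lambda>t. g (coord_line b z t)) has_vector_derivative pd b g z) (at (coord b z))"
proof -
  have "(g \<circ> coord_line b z) differentiable (at (coord b z))"
    by (metis assms coord_line_coord coord_line_differentiable differentiable_chain_at)
  then show ?thesis
    unfolding pd_coord_line using vector_derivative_works by (auto simp: o_def)
qed

lemma pd_eqI:
  "((\<lambda>t. g (coord_line b z t)) has_vector_derivative D) (at (coord b z)) \<Longrightarrow> pd b g z = D"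
  unfolding pd_coord_line by (rule vector_derivative_at)

lemma pd_cong_open:
  assumes "open U" "z \<in> U" "\<And>x. x \<in> U \<Longrightarrow> g x = h x"
  shows "pd b g z = pd b h z"
proof -
  have "open (coord_line b z -` U)"
    using continuous_on_coord_line assms(1) open_vimage by blast
  moreover have "coord b z \<in> coord_line b z -` U"
    using assms(2) by simp
  ultimately have ev: "eventually (\<lambda>t. coord_line b z t \<in> U) (nhds (coord b z))"
    using eventually_nhds by blast
  show ?thesis
    unfolding pd_coord_line
    by (rule vector_derivative_cong_eq) (auto intro: eventually_mono[OF ev] assms(3))
qed

lemma pds_append: "pds (xs @ ys) g = pds xs (pds ys g)"
  by (induction xs) auto

lemma all_shorter_lists_Suc:
  "(\<forall>bs. length bs < Suc n \<longrightarrow> P bs) \<longleftrightarrow> P [] \<and> (\<forall>b bs. length bs < n \<longrightarrow> P (bs @ [b]))"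
proof (intro iffI conjI allI impI)
  fix bs :: "'a list"
  assume "P [] \<and> (\<forall>b bs. length bs < n \<longrightarrow> P (bs @ [b]))" "length bs < Suc n"
  then show "P bs" by (cases bs rule: rev_cases) auto
qed auto

lemma pds_cong_open:
  assumes "open U" "z \<in> U" "\<And>x. x \<in> U \<Longrightarrow> g x = h x"
  shows "pds bs g z = pds bs h z"
  using assms(2)
proof (induction bs arbitrary: z)
  case Nil
  then show ?case using assms(3) by simp
next
  case (Cons b bs)
  then show ?case using pd_cong_open[OF assms(1) Cons.prems, of "pds bs g" "pds bs h"] by simp
qed

lemma pds_const: "pds bs (\<lambda>z. c) = (\<lambda>z. if bs = [] then c else 0)"
proof (induction bs)
  case (Cons b bs)
  then show ?case by (simp add: pd_coord_line)
qed simp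

lemma pd_add:
  "g differentiable (at z) \<Longrightarrow> h differentiable (at z) \<Longrightarrow> pd b (\<lambda>w. g w + h w) z = pd b g z + pd b h z"
  by (intro pd_eqI has_vector_derivative_add pd_has_vector_derivative)

lemma pd_diff:
  "g differentiable (at z) \<Longrightarrow> h differentiable (at z) \<Longrightarrow> pd b (\<lambda>w. g w - h w) z = pd b g z - pd b h z"
  by (intro pd_eqI has_vector_derivative_diff pd_has_vector_derivative)

lemma pd_minus: "g differentiable (at z) \<Longrightarrow> pd b (\<lambda>w. - g w) z = - pd b g z"
  by (intro pd_eqI has_vector_derivative_minus pd_has_vector_derivative)

lemma pd_scaleR_const: "g differentiable (at z) \<Longrightarrow> pd b (\<lambda>w. c *\<^sub>R g w) z = c *\<^sub>R pd b g z"
  by (intro pd_eqI bounded_linear.has_vector_derivative[OF bounded_linear_scaleR_right]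
      pd_has_vector_derivative)

lemma pd_inner_const: "g differentiable (at z) \<Longrightarrow> pd b (\<lambda>w. g w \<bullet> c) z = pd b g z \<bullet> c"
  by (intro pd_eqI bounded_linear.has_vector_derivative[OF bounded_linear_inner_left]
      pd_has_vector_derivative)

lemma pd_diff_const: "g differentiable (at z) \<Longrightarrow> pd b (\<lambda>w. g w - c) z = pd b g z"
  using pd_diff[of g z "\<lambda>_. c" b] by (simp add: pds_const[of "[b]", simplified])

lemma pd_bilinear:
  assumes "bounded_bilinear P" "g differentiable (at z)" "h differentiable (at z)"
  shows "pd b (\<lambda>w. P (g w) (h w)) z = P (pd b g z) (h z) + P (g z) (pd b h z)"
  using bounded_bilinear.has_vector_derivative[OF assms(1)
      pd_has_vector_derivative[OF assms(2)] pd_has_vector_derivative[OF assms(3)]]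
  by (intro pd_eqI) (simp add: add.commute)

lemma pd_inverse:
  fixes g :: "real \<times> real \<Rightarrow> real"
  assumes "g differentiable (at z)" "g z \<noteq> 0"
  shows "pd b (\<lambda>w. inverse (g w)) z = - (pd b g z * (inverse (g z) * inverse (g z)))"
proof -
  have "((\<lambda>t. g (coord_line b z t)) has_real_derivative pd b g z) (at (coord b z))"
    using pd_has_vector_derivative[OF assms(1)] has_real_derivative_iff_has_vector_derivative by blast
  from DERIV_inverse_fun[OF this] show ?thesis
    using assms(2)
    by (intro pd_eqI) (simp add: has_real_derivative_iff_has_vector_derivative power2_eq_square)
qed

definition differentiable_upto ::
    "nat \<Rightarrow> (real \<times> real) set \<Rightarrow> (real \<times> real \<Rightarrow> 'a::real_normed_vector) \<Rightarrow> bool" where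
  "differentiable_upto n U g \<longleftrightarrow>
     (\<forall>bs. length bs \<le> n \<longrightarrow> continuous_on U (pds bs g) \<and> (\<forall>z\<in>U. pds bs g differentiable (at z)))"

lemma smooth2_on_iff_differentiable_upto: "smooth2_on U g \<longleftrightarrow> (\<forall>n. differentiable_upto n U g)"
  unfolding smooth2_on_def differentiable_upto_def by blast

lemma differentiable_upto_0:
  "differentiable_upto 0 U g \<longleftrightarrow> continuous_on U g \<and> (\<forall>z\<in>U. g differentiable (at z))"
  by (simp add: differentiable_upto_def)

lemma differentiable_upto_Suc:
  "differentiable_upto (Suc n) U g \<longleftrightarrow>
     differentiable_upto 0 U g \<and> (\<forall>b. differentiable_upto n U (pd b g))"
  using all_shorter_lists_Suc[of "Suc n"
      "\<lambda>bs. continuous_on U (pds bs g) \<and> (\<forall>z\<in>U. pds bs g differentiable (at z))"]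
  unfolding differentiable_upto_def less_Suc_eq_le by (simp add: pds_append)

lemma differentiable_upto_mono: "differentiable_upto n U g \<Longrightarrow> m \<le> n \<Longrightarrow> differentiable_upto m U g"
  unfolding differentiable_upto_def by auto

lemma differentiable_upto_cong:
  assumes "open U" "\<And>x. x \<in> U \<Longrightarrow> g x = h x" "differentiable_upto n U g"
  shows "differentiable_upto n U h"
  unfolding differentiable_upto_def
proof (intro allI impI conjI ballI)
  fix bs :: "bool list" and z assume "length bs \<le> n"
  then have c: "continuous_on U (pds bs g)" and d: "\<forall>z\<in>U. pds bs g differentiable (at z)"
    using assms(3) unfolding differentiable_upto_def by auto
  have eq: "x \<in> U \<Longrightarrow> pds bs g x = pds bs h x" for x
    using pds_cong_open[OF assms(1) _ assms(2)] .
  show "continuous_on U (pds bs h)"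
    using continuous_on_eq[OF c eq] .
  assume "z \<in> U"
  moreover obtain D where "(pds bs g has_derivative D) (at z)"
    using d \<open>z \<in> U\<close> unfolding differentiable_def by blast
  ultimately show "pds bs h differentiable (at z)"
    using has_derivative_transform_within_open[OF _ assms(1), of "pds bs g" D z UNIV "pds bs h"] eq
    unfolding differentiable_def by blast
qed

lemma differentiable_upto_const: "differentiable_upto n U (\<lambda>z. c)"
  unfolding differentiable_upto_def pds_const by auto

lemma differentiable_upto_add:
  assumes "open U"
  shows "differentiable_upto n U g \<Longrightarrow> differentiable_upto n U h \<Longrightarrow>
    differentiable_upto n U (\<lambda>z. g z + h z)"
proof (induction n arbitrary: g h)
  case 0
  then show ?case by (auto simp: differentiable_upto_0 intro!: continuous_intros)
next
  case (Suc n)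
  have "differentiable_upto n U (pd b (\<lambda>z. g z + h z))" for b
  proof (rule differentiable_upto_cong[OF assms])
    show "differentiable_upto n U (\<lambda>z. pd b g z + pd b h z)"
      using Suc by (simp add: differentiable_upto_Suc)
    show "x \<in> U \<Longrightarrow> pd b g x + pd b h x = pd b (\<lambda>z. g z + h z) x" for x
      using Suc.prems by (simp add: differentiable_upto_Suc differentiable_upto_0 pd_add)
  qed
  then show ?case
    using Suc.prems by (auto simp: differentiable_upto_Suc differentiable_upto_0 intro!: continuous_intros)
qed

lemma differentiable_bilinear:
  "bounded_bilinear P \<Longrightarrow> g differentiable (at z) \<Longrightarrow> h differentiable (at z) \<Longrightarrow>
    (\<lambda>z. P (g z) (h z)) differentiable (at z)"
  unfolding differentiable_def using bounded_bilinear.FDERIV by blast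

lemma differentiable_upto_bilinear:
  assumes P: "bounded_bilinear P" and "open U"
  shows "differentiable_upto n U g \<Longrightarrow> differentiable_upto n U h \<Longrightarrow>
    differentiable_upto n U (\<lambda>z. P (g z) (h z))"
proof (induction n arbitrary: g h)
  case 0
  then show ?case
    by (auto simp: differentiable_upto_0
        intro!: bounded_bilinear.continuous_on[OF P] differentiable_bilinear[OF P])
next
  case (Suc n)
  have "differentiable_upto n U (pd b (\<lambda>z. P (g z) (h z)))" for b
  proof (rule differentiable_upto_cong[OF assms(2)])
    have "differentiable_upto n U (pd b g)" "differentiable_upto n U h"
      "differentiable_upto n U g" "differentiable_upto n U (pd b h)"
      using Suc.prems differentiable_upto_mono[of "Suc n" U _ n] by (auto simp: differentiable_upto_Suc)
    then show "differentiable_upto n U (\<lambda>z. P (pd b g z) (h z) + P (g z) (pd b h z))"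
      using Suc.IH by (intro differentiable_upto_add[OF assms(2)])
    show "x \<in> U \<Longrightarrow> P (pd b g x) (h x) + P (g x) (pd b h x) = pd b (\<lambda>z. P (g z) (h z)) x" for x
      using Suc.prems by (simp add: differentiable_upto_Suc differentiable_upto_0 pd_bilinear[OF P])
  qed
  then show ?case
    using Suc.prems
    by (auto simp: differentiable_upto_Suc differentiable_upto_0
        intro!: bounded_bilinear.continuous_on[OF P] differentiable_bilinear[OF P])
qed

lemma differentiable_upto_inverse:
  fixes g :: "real \<times> real \<Rightarrow> real"
  assumes "open U" "\<And>z. z \<in> U \<Longrightarrow> g z \<noteq> 0"
  shows "differentiable_upto n U g \<Longrightarrow> differentiable_upto n U (\<lambda>z. inverse (g z))"
proof (induction n)
  case 0
  then show ?case
    using assms(2) by (auto simp: differentiable_upto_0 intro!: continuous_intros derivative_intros)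
next
  case (Suc n)
  have inv: "differentiable_upto n U (\<lambda>z. inverse (g z))"
    using Suc differentiable_upto_mono[of "Suc n" U g n] by auto
  have "differentiable_upto n U (pd b (\<lambda>z. inverse (g z)))" for b
  proof (rule differentiable_upto_cong[OF assms(1)])
    have "differentiable_upto n U (pd b g)"
      using Suc.prems by (simp add: differentiable_upto_Suc)
    then show "differentiable_upto n U (\<lambda>z. (- 1) * (pd b g z * (inverse (g z) * inverse (g z))))"
      using inv by (intro differentiable_upto_bilinear[OF bounded_bilinear_mult assms(1)]
          differentiable_upto_const)
    show "x \<in> U \<Longrightarrow> (- 1) * (pd b g x * (inverse (g x) * inverse (g x))) = pd b (\<lambda>z. inverse (g z)) x"
      for x
      using Suc.prems assms(2) by (simp add: differentiable_upto_Suc differentiable_upto_0 pd_inverse)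
  qed
  then show ?case
    using Suc.prems assms(2)
    by (auto simp: differentiable_upto_Suc differentiable_upto_0 intro!: continuous_intros derivative_intros)
qed

lemma smooth2_on_cong: "open U \<Longrightarrow> (\<And>x. x \<in> U \<Longrightarrow> g x = h x) \<Longrightarrow> smooth2_on U g \<Longrightarrow> smooth2_on U h"
  unfolding smooth2_on_iff_differentiable_upto using differentiable_upto_cong by blast

lemma smooth2_on_const: "smooth2_on U (\<lambda>z. c)"
  unfolding smooth2_on_iff_differentiable_upto using differentiable_upto_const by blast

lemma smooth2_on_add:
  "open U \<Longrightarrow> smooth2_on U g \<Longrightarrow> smooth2_on U h \<Longrightarrow> smooth2_on U (\<lambda>z. g z + h z)"
  unfolding smooth2_on_iff_differentiable_upto using differentiable_upto_add by blast

lemma smooth2_on_bilinear: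
  "bounded_bilinear P \<Longrightarrow> open U \<Longrightarrow> smooth2_on U g \<Longrightarrow> smooth2_on U h \<Longrightarrow>
    smooth2_on U (\<lambda>z. P (g z) (h z))"
  unfolding smooth2_on_iff_differentiable_upto using differentiable_upto_bilinear by blast

lemma smooth2_on_inverse:
  fixes g :: "real \<times> real \<Rightarrow> real"
  shows "open U \<Longrightarrow> (\<And>z. z \<in> U \<Longrightarrow> g z \<noteq> 0) \<Longrightarrow> smooth2_on U g \<Longrightarrow> smooth2_on U (\<lambda>z. inverse (g z))"
  unfolding smooth2_on_iff_differentiable_upto using differentiable_upto_inverse by blast

lemma smooth2_on_pd:
  assumes "smooth2_on U g"
  shows "smooth2_on U (pd b g)"
  unfolding smooth2_on_def
proof
  fix bs :: "bool list"
  show "continuous_on U (pds bs (pd b g)) \<and> (\<forall>z\<in>U. pds bs (pd b g) differentiable (at z))"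
    using assms[unfolded smooth2_on_def, rule_format, of "bs @ [b]"] by (simp add: pds_append)
qed

lemma smooth2_on_pds: "smooth2_on U g \<Longrightarrow> smooth2_on U (pds bs g)"
  by (induction bs) (auto intro: smooth2_on_pd)

lemma smooth2_on_differentiable: "smooth2_on U g \<Longrightarrow> z \<in> U \<Longrightarrow> g differentiable (at z)"
  unfolding smooth2_on_def by (metis pds.simps(1))

lemma smooth2_on_continuous_on: "smooth2_on U g \<Longrightarrow> continuous_on U g"
  unfolding smooth2_on_def by (metis pds.simps(1))

lemma smooth2_on_mult:
  fixes g h :: "real \<times> real \<Rightarrow> real"
  shows "open U \<Longrightarrow> smooth2_on U g \<Longrightarrow> smooth2_on U h \<Longrightarrow> smooth2_on U (\<lambda>z. g z * h z)"
  by (rule smooth2_on_bilinear[OF bounded_bilinear_mult])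

lemma smooth2_on_scaleR:
  "open U \<Longrightarrow> smooth2_on U g \<Longrightarrow> smooth2_on U h \<Longrightarrow> smooth2_on U (\<lambda>z. g z *\<^sub>R h z)"
  by (rule smooth2_on_bilinear[OF bounded_bilinear_scaleR])

lemma smooth2_on_inner:
  "open U \<Longrightarrow> smooth2_on U g \<Longrightarrow> smooth2_on U h \<Longrightarrow> smooth2_on U (\<lambda>z. g z \<bullet> h z)"
  by (rule smooth2_on_bilinear[OF bounded_bilinear_inner])

lemma smooth2_on_cross3:
  "open U \<Longrightarrow> smooth2_on U g \<Longrightarrow> smooth2_on U h \<Longrightarrow> smooth2_on U (\<lambda>z. cross3 (g z) (h z))"
  by (rule smooth2_on_bilinear[OF bilinear_cross[THEN bilinear_conv_bounded_bilinear[THEN iffD1]]])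

lemma smooth2_on_bracket3:
  "open U \<Longrightarrow> smooth2_on U a \<Longrightarrow> smooth2_on U b \<Longrightarrow> smooth2_on U c \<Longrightarrow>
    smooth2_on U (\<lambda>z. bracket3 (a z) (b z) (c z))"
  unfolding bracket3_def by (intro smooth2_on_inner smooth2_on_cross3)

lemma smooth2_on_minus:
  assumes "open U" "smooth2_on U g"
  shows "smooth2_on U (\<lambda>z. - g z)"
  using smooth2_on_scaleR[OF assms(1) smooth2_on_const assms(2), of "- 1"] by simp

lemma smooth2_on_diff:
  assumes "open U" "smooth2_on U g" "smooth2_on U h"
  shows "smooth2_on U (\<lambda>z. g z - h z)"
  using smooth2_on_add[OF assms(1,2) smooth2_on_minus[OF assms(1,3)]] by simp

lemma smooth2_on_divide:
  fixes g h :: "real \<times> real \<Rightarrow> real"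
  shows "open U \<Longrightarrow> (\<And>z. z \<in> U \<Longrightarrow> h z \<noteq> 0) \<Longrightarrow> smooth2_on U g \<Longrightarrow> smooth2_on U h \<Longrightarrow>
    smooth2_on U (\<lambda>z. g z / h z)"
  unfolding divide_inverse by (intro smooth2_on_mult smooth2_on_inverse)

lemma smooth2_on_Pair:
  fixes g h :: "real \<times> real \<Rightarrow> real"
  assumes "open U" "smooth2_on U g" "smooth2_on U h"
  shows "smooth2_on U (\<lambda>z. (g z, h z))"
proof -
  have "smooth2_on U (\<lambda>z. g z *\<^sub>R (1, 0) + h z *\<^sub>R (0, 1))"
    using assms by (intro smooth2_on_add smooth2_on_scaleR smooth2_on_const)
  then show ?thesis
    by (rule smooth2_on_cong[OF assms(1), rotated]) simp
qed

lemma pd_inner_eq_const: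
  assumes U: "open U" "z \<in> U" and g: "smooth2_on U g" and h: "smooth2_on U h"
    and c: "\<And>x. x \<in> U \<Longrightarrow> g x \<bullet> h x = c"
  shows "pd b g z \<bullet> h z + g z \<bullet> pd b h z = 0"
proof -
  have "pd b (\<lambda>x. g x \<bullet> h x) z = pd b (\<lambda>x. c) z"
    using pd_cong_open[OF U c] .
  then show ?thesis
    using pd_bilinear[OF bounded_bilinear_inner smooth2_on_differentiable[OF g U(2)]
        smooth2_on_differentiable[OF h U(2)]]
    by (simp add: pds_const[of "[b]", simplified])
qed

lemma pd_neg_scaleR_combination:
  assumes U: "open U" "z \<in> U" and X: "\<And>w. w \<in> U \<Longrightarrow> X w = - (a w *\<^sub>R Y w) - c w *\<^sub>R W w"
    and sm: "smooth2_on U a" "smooth2_on U c" "smooth2_on U Y" "smooth2_on U W"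
  shows "pd b X z = - (pd b a z *\<^sub>R Y z + a z *\<^sub>R pd b Y z) - (pd b c z *\<^sub>R W z + c z *\<^sub>R pd b W z)"
proof -
  have aY: "smooth2_on U (\<lambda>w. a w *\<^sub>R Y w)" and cW: "smooth2_on U (\<lambda>w. c w *\<^sub>R W w)"
    using sm by (simp_all add: smooth2_on_scaleR U(1))
  have "pd b X z = pd b (\<lambda>w. - (a w *\<^sub>R Y w) - c w *\<^sub>R W w) z"
    using pd_cong_open[OF U X] .
  also have "\<dots> = - pd b (\<lambda>w. a w *\<^sub>R Y w) z - pd b (\<lambda>w. c w *\<^sub>R W w) z"
    using pd_diff[OF smooth2_on_differentiable[OF smooth2_on_minus[OF U(1) aY] U(2)]
        smooth2_on_differentiable[OF cW U(2)]]
      pd_minus[OF smooth2_on_differentiable[OF aY U(2)]] by simp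
  finally show ?thesis
    using sm U(2) by (simp add: pd_bilinear[OF bounded_bilinear_scaleR] smooth2_on_differentiable)
qed

section \<open>Symmetry of mixed partial derivatives\<close>

lemma mixed_difference_mvt:
  fixes \<phi> \<phi>1 \<phi>12 :: "real \<Rightarrow> real \<Rightarrow> real"
  assumes "a < a'" "c < c'"
    and \<phi>1: "\<And>s t. a \<le> s \<Longrightarrow> s \<le> a' \<Longrightarrow> c \<le> t \<Longrightarrow> t \<le> c' \<Longrightarrow> ((\<lambda>s. \<phi> s t) has_real_derivative \<phi>1 s t) (at s)"
    and \<phi>12: "\<And>s t. a \<le> s \<Longrightarrow> s \<le> a' \<Longrightarrow> c \<le> t \<Longrightarrow> t \<le> c' \<Longrightarrow> ((\<lambda>t. \<phi>1 s t) has_real_derivative \<phi>12 s t) (at t)"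
  obtains s t where "a < s" "s < a'" "c < t" "t < c'"
    "\<phi> a' c' - \<phi> a' c - \<phi> a c' + \<phi> a c = (a' - a) * (c' - c) * \<phi>12 s t"
proof -
  have "((\<lambda>s. \<phi> s c' - \<phi> s c) has_real_derivative \<phi>1 s c' - \<phi>1 s c) (at s)"
    if "a \<le> s" "s \<le> a'" for s
    using \<phi>1 that \<open>c < c'\<close> by (intro DERIV_diff) auto
  from MVT2[OF \<open>a < a'\<close> this] obtain s where s: "a < s" "s < a'"
    "(\<phi> a' c' - \<phi> a' c) - (\<phi> a c' - \<phi> a c) = (a' - a) * (\<phi>1 s c' - \<phi>1 s c)"
    by blast
  moreover have "((\<lambda>t. \<phi>1 s t) has_real_derivative \<phi>12 s t) (at t)" if "c \<le> t" "t \<le> c'" for t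
    using \<phi>12 s that by simp
  from MVT2[OF \<open>c < c'\<close> this] obtain t where "c < t" "t < c'" "\<phi>1 s c' - \<phi>1 s c = (c' - c) * \<phi>12 s t"
    by blast
  ultimately show thesis
    by (intro that[of s t]) auto
qed

lemma mixed_partials_meet:
  fixes g :: "real \<times> real \<Rightarrow> real"
  assumes g: "smooth2_on U g" and "h > 0"
    and square: "\<And>s t. x \<le> s \<Longrightarrow> s \<le> x + h \<Longrightarrow> y \<le> t \<Longrightarrow> t \<le> y + h \<Longrightarrow> (s, t) \<in> U"
  obtains s1 t1 s2 t2 where "x < s1" "s1 < x + h" "y < t1" "t1 < y + h" "x < s2" "s2 < x + h"
    "y < t2" "t2 < y + h" "dv (du g) (s1, t1) = du (dv g) (s2, t2)"
proof -
  have pd_at: "((\<lambda>s. G (s, t)) has_real_derivative du G (s, t)) (at s)"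
    "((\<lambda>t. G (s, t)) has_real_derivative dv G (s, t)) (at t)"
    if "smooth2_on U G" "(s, t) \<in> U" for G :: "real \<times> real \<Rightarrow> real" and s t
    using pd_has_vector_derivative[OF smooth2_on_differentiable[OF that], of False]
      pd_has_vector_derivative[OF smooth2_on_differentiable[OF that], of True]
    by (simp_all add: coord_line_def coord_def has_real_derivative_iff_has_vector_derivative)
  have hx: "x < x + h" and hy: "y < y + h"
    using \<open>h > 0\<close> by simp_all
  obtain s1 t1 where st1: "x < s1" "s1 < x + h" "y < t1" "t1 < y + h"
    "g (x + h, y + h) - g (x + h, y) - g (x, y + h) + g (x, y)
      = (x + h - x) * (y + h - y) * dv (du g) (s1, t1)"
    by (rule mixed_difference_mvt[OF hx hy, of "\<lambda>s t. g (s, t)" "\<lambda>s t. du g (s, t)"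
          "\<lambda>s t. dv (du g) (s, t)"])
      (auto intro!: pd_at square g smooth2_on_pd)
  obtain t2 s2 where st2: "y < t2" "t2 < y + h" "x < s2" "s2 < x + h"
    "g (x + h, y + h) - g (x, y + h) - g (x + h, y) + g (x, y)
      = (y + h - y) * (x + h - x) * du (dv g) (s2, t2)"
    by (rule mixed_difference_mvt[OF hy hx, of "\<lambda>t s. g (s, t)" "\<lambda>t s. dv g (s, t)"
          "\<lambda>t s. du (dv g) (s, t)"])
      (auto intro!: pd_at square g smooth2_on_pd)
  have "h * h * dv (du g) (s1, t1) = h * h * du (dv g) (s2, t2)"
    using st1(5) st2(5) by (simp only: add_diff_cancel_left')
  then show thesis
    using that st1(1-4) st2(1-4) \<open>h > 0\<close> by simp
qed

text \<open>Both mixed partials are values of the same second difference quotient at points of a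
  small square, so their continuity forces them to agree.\<close>

lemma schwarz_real:
  fixes g :: "real \<times> real \<Rightarrow> real"
  assumes U: "open U" and g: "smooth2_on U g" and z: "z \<in> U"
  shows "dv (du g) z = du (dv g) z"
proof (rule ccontr)
  assume "dv (du g) z \<noteq> du (dv g) z"
  define e where "e = \<bar>dv (du g) z - du (dv g) z\<bar> / 2"
  have "e > 0" using \<open>dv (du g) z \<noteq> du (dv g) z\<close> by (simp add: e_def)
  have "continuous_on U (dv (du g))" "continuous_on U (du (dv g))"
    using g by (simp_all add: smooth2_on_continuous_on smooth2_on_pd)
  then have "isCont (dv (du g)) z" "isCont (du (dv g)) z"
    using U z continuous_on_eq_continuous_at by blast+
  moreover have "eventually (\<lambda>w. \<bar>G w - G z\<bar> < e) (nhds z)" if "isCont G z" for G :: "real \<times> real \<Rightarrow> real"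
  proof -
    have "(G \<longlongrightarrow> G z) (nhds z)"
      using that unfolding isCont_def tendsto_at_iff_tendsto_nhds .
    from tendsto_iff[THEN iffD1, OF this, rule_format, OF \<open>e > 0\<close>] show ?thesis
      by (simp add: dist_real_def)
  qed
  ultimately have "eventually (\<lambda>w. w \<in> U \<and> \<bar>dv (du g) w - dv (du g) z\<bar> < e
      \<and> \<bar>du (dv g) w - du (dv g) z\<bar> < e) (nhds z)"
    using U z by (intro eventually_conj eventually_nhds_in_open) auto
  then obtain r where "r > 0" and r: "\<And>w. dist w z < r \<Longrightarrow>
      w \<in> U \<and> \<bar>dv (du g) w - dv (du g) z\<bar> < e \<and> \<bar>du (dv g) w - du (dv g) z\<bar> < e"
    unfolding eventually_nhds_metric by (auto simp: dist_commute)
  obtain x y where zxy: "z = (x, y)" by fastforce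
  have near: "dist (s, t) z < r" if "x \<le> s" "s \<le> x + r / 3" "y \<le> t" "t \<le> y + r / 3" for s t
  proof -
    have "dist (s, t) z \<le> \<bar>s - x\<bar> + \<bar>t - y\<bar>"
      using norm_Pair_le[of "s - x" "t - y"] by (simp add: zxy dist_norm)
    also have "\<dots> < r" using that \<open>r > 0\<close> by simp
    finally show ?thesis .
  qed
  obtain s1 t1 s2 t2 where "x < s1" "s1 < x + r / 3" "y < t1" "t1 < y + r / 3"
    "x < s2" "s2 < x + r / 3" "y < t2" "t2 < y + r / 3" "dv (du g) (s1, t1) = du (dv g) (s2, t2)"
    by (rule mixed_partials_meet[OF g, of "r / 3" x y]) (use \<open>r > 0\<close> r near in auto)
  moreover from this(1-8)
  have "\<bar>dv (du g) (s1, t1) - dv (du g) z\<bar> < e" "\<bar>du (dv g) (s2, t2) - du (dv g) z\<bar> < e"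
    using r[OF near] by (auto simp: less_imp_le)
  ultimately show False
    unfolding e_def by (auto simp: abs_if split: if_splits)
qed

lemma schwarz:
  fixes g :: "real \<times> real \<Rightarrow> 'a::euclidean_space"
  assumes U: "open U" and g: "smooth2_on U g" and z: "z \<in> U"
  shows "dv (du g) z = du (dv g) z"
proof (rule euclidean_eqI)
  fix i :: 'a
  have g_i: "smooth2_on U (\<lambda>w. g w \<bullet> i)"
    by (rule smooth2_on_inner[OF U g smooth2_on_const])
  have pd_i: "pd b' (pd b (\<lambda>w. g w \<bullet> i)) z = pd b' (pd b g) z \<bullet> i" for b b'
  proof -
    have "x \<in> U \<Longrightarrow> pd b (\<lambda>w. g w \<bullet> i) x = pd b g x \<bullet> i" for x
      using pd_inner_const[OF smooth2_on_differentiable[OF g]] .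
    then have "pd b' (pd b (\<lambda>w. g w \<bullet> i)) z = pd b' (\<lambda>w. pd b g w \<bullet> i) z"
      by (rule pd_cong_open[OF U z])
    also have "\<dots> = pd b' (pd b g) z \<bullet> i"
      using pd_inner_const[OF smooth2_on_differentiable[OF smooth2_on_pd[OF g] z]] .
    finally show ?thesis .
  qed
  show "dv (du g) z \<bullet> i = du (dv g) z \<bullet> i"
    using schwarz_real[OF U g_i z] by (simp add: pd_i)
qed

lemma dv_iterated_du_commute:
  fixes g :: "real \<times> real \<Rightarrow> 'a::euclidean_space"
  assumes U: "open U" and g: "smooth2_on U g"
  shows "z \<in> U \<Longrightarrow> dv (pds (replicate i False) g) z = pds (replicate i False) (dv g) z"
proof (induction i arbitrary: z)
  case (Suc i)
  have "dv (du (pds (replicate i False) g)) z = du (dv (pds (replicate i False) g)) z"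
    using schwarz[OF U smooth2_on_pds[OF g] Suc.prems] .
  also have "\<dots> = du (pds (replicate i False) (dv g)) z"
    using pd_cong_open[OF U Suc.prems Suc.IH] .
  finally show ?case by simp
qed simp

lemma pds_canonical_order:
  fixes g :: "real \<times> real \<Rightarrow> 'a::euclidean_space"
  assumes U: "open U" and g: "smooth2_on U g"
  shows "z \<in> U \<Longrightarrow>
    pds bs g z = pds (replicate (count_list bs False) False @ replicate (count_list bs True) True) g z"
proof (induction bs arbitrary: z)
  case (Cons b bs)
  let ?u = "replicate (count_list bs False) False" and ?v = "replicate (count_list bs True) True"
  have "pds (b # bs) g z = pd b (pds (?u @ ?v) g) z"
    using pd_cong_open[OF U Cons.prems Cons.IH] by simp
  moreover have "dv (pds ?u (pds ?v g)) z = pds ?u (dv (pds ?v g)) z"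
    using dv_iterated_du_commute[OF U smooth2_on_pds[OF g] Cons.prems] .
  ultimately show ?case
    by (cases b) (simp_all add: pds_append)
qed simp

section \<open>Vanishing to finite order\<close>

definition vanishes_to_order :: "real \<times> real \<Rightarrow> nat \<Rightarrow> (real \<times> real \<Rightarrow> 'a::real_normed_vector) \<Rightarrow> bool" where
  "vanishes_to_order z n g \<longleftrightarrow> (\<forall>bs. length bs < n \<longrightarrow> pds bs g z = 0)"

lemma vanishes_to_order_0 [simp]: "vanishes_to_order z 0 g"
  by (simp add: vanishes_to_order_def)

lemma vanishes_to_order_Suc:
  "vanishes_to_order z (Suc n) g \<longleftrightarrow> g z = 0 \<and> (\<forall>b. vanishes_to_order z n (pd b g))"
  using all_shorter_lists_Suc[of n "\<lambda>bs. pds bs g z = 0"] unfolding vanishes_to_order_def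
  by (simp add: pds_append)

lemma vanishes_to_order_mono: "vanishes_to_order z n g \<Longrightarrow> m \<le> n \<Longrightarrow> vanishes_to_order z m g"
  unfolding vanishes_to_order_def by auto

lemma vanishes_to_order_pd: "vanishes_to_order z n g \<Longrightarrow> vanishes_to_order z (n - 1) (pd b g)"
  by (cases n) (simp_all add: vanishes_to_order_Suc)

lemma vanishes_to_order_cong:
  assumes "open U" "z \<in> U" "\<And>x. x \<in> U \<Longrightarrow> g x = h x" "vanishes_to_order z n g"
  shows "vanishes_to_order z n h"
  using assms(4) pds_cong_open[OF assms(1-3)] unfolding vanishes_to_order_def by simp

lemma vanishes_to_order_add:
  assumes U: "open U" "z \<in> U"
  shows "smooth2_on U g \<Longrightarrow> smooth2_on U h \<Longrightarrow> vanishes_to_order z n g \<Longrightarrow> vanishes_to_order z n h \<Longrightarrow>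
    vanishes_to_order z n (\<lambda>w. g w + h w)"
proof (induction n arbitrary: g h)
  case (Suc n)
  have "vanishes_to_order z n (pd b (\<lambda>w. g w + h w))" for b
  proof (rule vanishes_to_order_cong[OF U])
    show "vanishes_to_order z n (\<lambda>w. pd b g w + pd b h w)"
      using Suc.IH[OF smooth2_on_pd[OF Suc.prems(1)] smooth2_on_pd[OF Suc.prems(2)]] Suc.prems(3,4)
      by (simp add: vanishes_to_order_Suc)
    show "x \<in> U \<Longrightarrow> pd b g x + pd b h x = pd b (\<lambda>w. g w + h w) x" for x
      using Suc.prems(1,2) by (simp add: pd_add smooth2_on_differentiable)
  qed
  then show ?case
    using Suc.prems by (simp add: vanishes_to_order_Suc)
qed simp

lemma vanishes_to_order_bilinear:
  assumes P: "bounded_bilinear P" and U: "open U" "z \<in> U"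
    and "smooth2_on U g" "smooth2_on U h" "vanishes_to_order z n g" "vanishes_to_order z m h"
  shows "vanishes_to_order z (n + m) (\<lambda>w. P (g w) (h w))"
  using assms(4-)
proof (induction "n + m" arbitrary: n m g h)
  case (Suc N)
  note IH = Suc.hyps(1) and g = Suc.prems(1) and h = Suc.prems(2)
  have at_z: "P (g z) (h z) = 0"
  proof (cases n)
    case 0
    then have "h z = 0" using Suc.hyps(2) Suc.prems(4) by (auto simp: vanishes_to_order_Suc)
    then show ?thesis by (simp add: bounded_bilinear.zero_right[OF P])
  next
    case (Suc n')
    then have "g z = 0" using Suc.prems(3) by (simp add: vanishes_to_order_Suc)
    then show ?thesis by (simp add: bounded_bilinear.zero_left[OF P])
  qed
  \<comment> \<open>\<open>n - 1\<close> truncates at \<open>0\<close>, where vanishing is vacuous, so no case split on \<open>n\<close> or \<open>m\<close> is needed\<close>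
  have N: "n - 1 + (N - (n - 1)) = N" "N - (n - 1) \<le> m" "N - (m - 1) \<le> n" "N - (m - 1) + (m - 1) = N"
    using Suc.hyps(2) by arith+
  have left: "vanishes_to_order z N (\<lambda>w. P (pd b g w) (h w))" for b
    using IH[of "n - 1" "N - (n - 1)"] N smooth2_on_pd[OF g] h
      vanishes_to_order_pd[OF Suc.prems(3)] vanishes_to_order_mono[OF Suc.prems(4)] by simp
  have right: "vanishes_to_order z N (\<lambda>w. P (g w) (pd b h w))" for b
    using IH[of "N - (m - 1)" "m - 1"] N g smooth2_on_pd[OF h]
      vanishes_to_order_mono[OF Suc.prems(3)] vanishes_to_order_pd[OF Suc.prems(4)] by simp
  have "vanishes_to_order z N (pd b (\<lambda>w. P (g w) (h w)))" for b
  proof (rule vanishes_to_order_cong[OF U])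
    show "vanishes_to_order z N (\<lambda>w. P (pd b g w) (h w) + P (g w) (pd b h w))"
      using Suc.prems left right
      by (intro vanishes_to_order_add[OF U] smooth2_on_bilinear[OF P U(1)] smooth2_on_pd)
    show "x \<in> U \<Longrightarrow> P (pd b g x) (h x) + P (g x) (pd b h x) = pd b (\<lambda>w. P (g w) (h w)) x" for x
      using Suc.prems by (simp add: pd_bilinear[OF P] smooth2_on_differentiable)
  qed
  then show ?case
    using at_z by (simp flip: Suc.hyps(2) add: vanishes_to_order_Suc)
qed simp

lemma vanishes_to_order_bilinear_right:
  assumes "bounded_bilinear P" "open U" "z \<in> U" "smooth2_on U g" "smooth2_on U h" "vanishes_to_order z n g"
  shows "vanishes_to_order z n (\<lambda>w. P (g w) (h w))"
  using vanishes_to_order_bilinear[OF assms vanishes_to_order_0] by simp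

lemma vanishes_to_order_bilinear_left:
  assumes "bounded_bilinear P" "open U" "z \<in> U" "smooth2_on U g" "smooth2_on U h" "vanishes_to_order z n h"
  shows "vanishes_to_order z n (\<lambda>w. P (g w) (h w))"
  using vanishes_to_order_bilinear[OF assms(1-5) vanishes_to_order_0 assms(6)] by simp

lemma vanishes_to_order_scaleR_const:
  assumes "open U" "z \<in> U" "smooth2_on U g" "vanishes_to_order z n g"
  shows "vanishes_to_order z n (\<lambda>w. c *\<^sub>R g w)"
  by (rule vanishes_to_order_bilinear_left[OF bounded_bilinear_scaleR assms(1,2) smooth2_on_const assms(3,4)])

lemma vanishes_to_order_diff:
  assumes "open U" "z \<in> U" "smooth2_on U g" "smooth2_on U h" "vanishes_to_order z n g" "vanishes_to_order z n h"
  shows "vanishes_to_order z n (\<lambda>w. g w - h w)"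
proof -
  have "vanishes_to_order z n (\<lambda>w. (- 1) *\<^sub>R h w)"
    by (rule vanishes_to_order_scaleR_const[OF assms(1,2,4,6)])
  then show ?thesis
    using vanishes_to_order_add[OF assms(1,2,3) smooth2_on_minus[OF assms(1,4)] assms(5)] by simp
qed

lemma vanishes_to_order_combination:
  fixes a c X Y :: "real \<times> real \<Rightarrow> real"
  assumes U: "open U" "z \<in> U" and sm: "smooth2_on U a" "smooth2_on U c" "smooth2_on U X" "smooth2_on U Y"
    and "vanishes_to_order z n a" "vanishes_to_order z n c"
  shows "vanishes_to_order z n (\<lambda>w. a w * X w + c w * Y w)"
  using assms
  by (intro vanishes_to_order_add[OF U] smooth2_on_mult[OF U(1)]
      vanishes_to_order_bilinear_right[OF bounded_bilinear_mult U]) auto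

lemma vanishes_to_order_Pair_iff:
  fixes g h :: "real \<times> real \<Rightarrow> real"
  assumes U: "open U" "z \<in> U" and g: "smooth2_on U g" and h: "smooth2_on U h"
  shows "vanishes_to_order z n (\<lambda>w. (g w, h w)) \<longleftrightarrow> vanishes_to_order z n g \<and> vanishes_to_order z n h"
proof
  assume gh: "vanishes_to_order z n (\<lambda>w. (g w, h w))"
  have "vanishes_to_order z n (\<lambda>w. (g w, h w) \<bullet> e)" for e :: "real \<times> real"
    using vanishes_to_order_bilinear_right[OF bounded_bilinear_inner U
        smooth2_on_Pair[OF U(1) g h] smooth2_on_const gh] .
  from this[of "(1, 0)"] this[of "(0, 1)"]
  show "vanishes_to_order z n g \<and> vanishes_to_order z n h"
    by (simp add: inner_prod_def)
next
  assume "vanishes_to_order z n g \<and> vanishes_to_order z n h"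
  then have "vanishes_to_order z n (\<lambda>w. g w *\<^sub>R (1::real, 0::real) + h w *\<^sub>R (0, 1))"
    by (intro vanishes_to_order_add[OF U] smooth2_on_scaleR[OF U(1)] g h smooth2_on_const
        vanishes_to_order_bilinear_right[OF bounded_bilinear_scaleR U]) auto
  then show "vanishes_to_order z n (\<lambda>w. (g w, h w))"
    by simp
qed

lemma vanishes_to_order_Suc_diff_const:
  assumes U: "open U" "z \<in> U" and g: "smooth2_on U g"
  shows "vanishes_to_order z (Suc n) (\<lambda>w. g w - c) \<longleftrightarrow> g z = c \<and> (\<forall>b. vanishes_to_order z n (pd b g))"
proof -
  have "pd b (\<lambda>w. g w - c) x = pd b g x" if "x \<in> U" for b x
    using pd_diff_const[OF smooth2_on_differentiable[OF g that]] .
  then have "vanishes_to_order z n (pd b (\<lambda>w. g w - c)) \<longleftrightarrow> vanishes_to_order z n (pd b g)" for b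
    using vanishes_to_order_cong[OF U] by metis
  then show ?thesis
    by (simp add: vanishes_to_order_Suc)
qed

lemma pds_diff:
  assumes U: "open U" and g: "smooth2_on U g" and h: "smooth2_on U h"
  shows "z \<in> U \<Longrightarrow> pds bs (\<lambda>w. g w - h w) z = pds bs g z - pds bs h z"
proof (induction bs arbitrary: z)
  case (Cons b bs)
  have "pds (b # bs) (\<lambda>w. g w - h w) z = pd b (\<lambda>w. pds bs g w - pds bs h w) z"
    using pd_cong_open[OF U Cons.prems Cons.IH] by simp
  also have "\<dots> = pds (b # bs) g z - pds (b # bs) h z"
    using pd_diff[OF smooth2_on_differentiable[OF smooth2_on_pds[OF g] Cons.prems]
        smooth2_on_differentiable[OF smooth2_on_pds[OF h] Cons.prems]] by simp
  finally show ?case .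
qed simp

lemma jet_eq_iff_vanishes_to_order:
  fixes g h :: "real \<times> real \<Rightarrow> 'a::euclidean_space"
  assumes U: "open U" "z \<in> U" and g: "smooth2_on U g" and h: "smooth2_on U h"
  shows "jet_eq z m g h \<longleftrightarrow> vanishes_to_order z (Suc m) (\<lambda>w. g w - h w)"
proof -
  have "vanishes_to_order z (Suc m) (\<lambda>w. g w - h w) \<longleftrightarrow> (\<forall>bs. length bs \<le> m \<longrightarrow> pds bs g z = pds bs h z)"
    unfolding vanishes_to_order_def using pds_diff[OF U(1) g h U(2)] by auto
  also have "\<dots> \<longleftrightarrow> jet_eq z m g h"
  proof
    assume "jet_eq z m g h"
    moreover have "count_list bs False + count_list bs True = length bs" for bs :: "bool list"
      by (induction bs) auto
    ultimately show "\<forall>bs. length bs \<le> m \<longrightarrow> pds bs g z = pds bs h z"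
      unfolding jet_eq_def using pds_canonical_order[OF U(1) _ U(2)] g h by metis
  qed (auto simp: jet_eq_def)
  finally show ?thesis ..
qed

section \<open>Triple products\<close>

text \<open>The vectors \<open>b \<times> c, c \<times> a, a \<times> b\<close> form the dual basis of \<open>a, b, c\<close>,
  scaled by \<open>[a, b, c]\<close>.\<close>

lemma bracket3_scaleR_expansion:
  "bracket3 a b c *\<^sub>R x = (x \<bullet> a) *\<^sub>R cross3 b c + (x \<bullet> b) *\<^sub>R cross3 c a + (x \<bullet> c) *\<^sub>R cross3 a b"
  unfolding bracket3_def by (simp add: cross3_simps forall_3)

lemma bracket3_cross3: "bracket3 (cross3 a b) (cross3 b c) (cross3 c a) = (bracket3 a b c)\<^sup>2"
  unfolding bracket3_def by (simp add: cross3_simps power2_eq_square)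

lemma bracket3_linear:
  "bracket3 (x + y) b c = bracket3 x b c + bracket3 y b c"
  "bracket3 (x - y) b c = bracket3 x b c - bracket3 y b c"
  "bracket3 (- x) b c = - bracket3 x b c"
  "bracket3 (s *\<^sub>R x) b c = s * bracket3 x b c"
  "bracket3 a (x + y) c = bracket3 a x c + bracket3 a y c"
  "bracket3 a (x - y) c = bracket3 a x c - bracket3 a y c"
  "bracket3 a (- x) c = - bracket3 a x c"
  "bracket3 a (s *\<^sub>R x) c = s * bracket3 a x c"
  "bracket3 a b (x + y) = bracket3 a b x + bracket3 a b y"
  "bracket3 a b (x - y) = bracket3 a b x - bracket3 a b y"
  "bracket3 a b (- x) = - bracket3 a b x"
  "bracket3 a b (s *\<^sub>R x) = s * bracket3 a b x"
  unfolding bracket3_def by (simp_all add: cross3_simps)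

lemma bracket3_alternating [simp]:
  "bracket3 a a c = 0" "bracket3 a b a = 0" "bracket3 a b b = 0"
  unfolding bracket3_def by (simp_all add: cross3_simps)

section \<open>Equiaffine immersions in isothermal coordinates\<close>

locale equiaffine_chart =
  fixes U :: "(real \<times> real) set"
    and f \<xi> \<nu> :: "real \<times> real \<Rightarrow> real^3"
    and \<rho> b11 b12 b22 :: "real \<times> real \<Rightarrow> real"
    and \<Gamma>11u \<Gamma>11v \<Gamma>12u \<Gamma>12v \<Gamma>22u \<Gamma>22v :: "real \<times> real \<Rightarrow> real"
  assumes open_U: "open U"
    and smooth_f: "smooth2_on U f" and smooth_\<xi>: "smooth2_on U \<xi>"
    and transversal: "\<And>z. z \<in> U \<Longrightarrow> bracket3 (du f z) (dv f z) (\<xi> z) \<noteq> 0"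
    and Gauss_uu: "\<And>z. z \<in> U \<Longrightarrow> du (du f) z = \<Gamma>11u z *\<^sub>R du f z + \<Gamma>11v z *\<^sub>R dv f z + \<rho> z *\<^sub>R \<xi> z"
    and Gauss_uv: "\<And>z. z \<in> U \<Longrightarrow> dv (du f) z = \<Gamma>12u z *\<^sub>R du f z + \<Gamma>12v z *\<^sub>R dv f z"
    and Gauss_vv: "\<And>z. z \<in> U \<Longrightarrow> dv (dv f) z = \<Gamma>22u z *\<^sub>R du f z + \<Gamma>22v z *\<^sub>R dv f z + \<rho> z *\<^sub>R \<xi> z"
    and \<rho>_pos: "\<And>z. z \<in> U \<Longrightarrow> \<rho> z > 0"
    and Weingarten_u: "\<And>z. z \<in> U \<Longrightarrow> du \<xi> z = - (b11 z *\<^sub>R du f z) - b12 z *\<^sub>R dv f z"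
    and Weingarten_v: "\<And>z. z \<in> U \<Longrightarrow> dv \<xi> z = - (b12 z *\<^sub>R du f z) - b22 z *\<^sub>R dv f z"
    and conormal: "\<And>z. z \<in> U \<Longrightarrow> \<nu> z \<bullet> du f z = 0 \<and> \<nu> z \<bullet> dv f z = 0 \<and> \<nu> z \<bullet> \<xi> z = 1"
begin

abbreviation frame_det :: "real \<times> real \<Rightarrow> real" where
  "frame_det z \<equiv> bracket3 (du f z) (dv f z) (\<xi> z)"

lemma smooth_frame:
  "smooth2_on U (du f)" "smooth2_on U (dv f)" "smooth2_on U (du (du f))" "smooth2_on U (dv (du f))"
  "smooth2_on U (dv (dv f))" "smooth2_on U (du \<xi>)" "smooth2_on U (dv \<xi>)"
  using smooth_f smooth_\<xi> by (simp_all add: smooth2_on_pd)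

lemma smooth_frame_det: "smooth2_on U frame_det"
  using smooth_frame smooth_\<xi> by (simp add: smooth2_on_bracket3 open_U)

lemma smooth_divide_frame_det: "smooth2_on U g \<Longrightarrow> smooth2_on U (\<lambda>z. g z / frame_det z)"
  using smooth2_on_divide[OF open_U transversal _ smooth_frame_det] by blast

lemma conormal_eq:
  assumes "z \<in> U"
  shows "\<nu> z = (1 / frame_det z) *\<^sub>R cross3 (du f z) (dv f z)"
proof -
  have "cross3 (du f z) (dv f z) = frame_det z *\<^sub>R \<nu> z"
    using bracket3_scaleR_expansion[of "du f z" "dv f z" "\<xi> z" "\<nu> z"] conormal[OF assms] by simp
  then show ?thesis
    using transversal[OF assms] by simp
qed

lemma smooth_conormal: "smooth2_on U \<nu>"
proof (rule smooth2_on_cong[OF open_U])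
  show "smooth2_on U (\<lambda>z. (1 / frame_det z) *\<^sub>R cross3 (du f z) (dv f z))"
    by (intro smooth2_on_scaleR smooth_divide_frame_det smooth2_on_cross3 open_U smooth2_on_const smooth_frame)
qed (simp add: conormal_eq)

lemma conormal_second_fundamental:
  assumes "z \<in> U"
  shows "\<nu> z \<bullet> du (du f) z = \<rho> z" "\<nu> z \<bullet> dv (du f) z = 0" "\<nu> z \<bullet> du (dv f) z = 0"
    "\<nu> z \<bullet> dv (dv f) z = \<rho> z" "\<nu> z \<bullet> du \<xi> z = 0" "\<nu> z \<bullet> dv \<xi> z = 0"
  using Gauss_uu[OF assms] Gauss_uv[OF assms] Gauss_vv[OF assms] Weingarten_u[OF assms]
    Weingarten_v[OF assms] conormal[OF assms] schwarz[OF open_U smooth_f assms]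
  by (simp_all add: inner_add_right inner_diff_right)

lemma smooth_\<rho>: "smooth2_on U \<rho>"
  by (rule smooth2_on_cong[OF open_U _ smooth2_on_inner[OF open_U smooth_conormal smooth_frame(3)]])
    (simp add: conormal_second_fundamental)

lemma shape_operator_eq:
  assumes "z \<in> U"
  shows "b11 z = - bracket3 (du \<xi> z) (dv f z) (\<xi> z) / frame_det z"
    "b12 z = - bracket3 (du f z) (du \<xi> z) (\<xi> z) / frame_det z"
    "b22 z = - bracket3 (du f z) (dv \<xi> z) (\<xi> z) / frame_det z"
  using transversal[OF assms]
  by (simp_all add: Weingarten_u[OF assms] Weingarten_v[OF assms] bracket3_linear field_simps)

lemma smooth_shape_operator: "smooth2_on U b11" "smooth2_on U b12" "smooth2_on U b22"
proof -
  have sm: "smooth2_on U (\<lambda>z. - bracket3 (A z) (B z) (\<xi> z) / frame_det z)"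
    if "smooth2_on U A" "smooth2_on U B" for A B
    using that by (intro smooth_divide_frame_det smooth2_on_minus smooth2_on_bracket3 open_U smooth_\<xi>)
  show "smooth2_on U b11"
    by (rule smooth2_on_cong[OF open_U _ sm[OF smooth_frame(6,2)]]) (simp add: shape_operator_eq)
  show "smooth2_on U b12"
    by (rule smooth2_on_cong[OF open_U _ sm[OF smooth_frame(1,6)]]) (simp add: shape_operator_eq)
  show "smooth2_on U b22"
    by (rule smooth2_on_cong[OF open_U _ sm[OF smooth_frame(1,7)]]) (simp add: shape_operator_eq)
qed

lemma conormal_derivatives:
  assumes z: "z \<in> U"
  shows "du \<nu> z \<bullet> du f z = - \<rho> z" "du \<nu> z \<bullet> dv f z = 0" "du \<nu> z \<bullet> \<xi> z = 0"
    "dv \<nu> z \<bullet> du f z = 0" "dv \<nu> z \<bullet> dv f z = - \<rho> z" "dv \<nu> z \<bullet> \<xi> z = 0"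
proof -
  have "pd b \<nu> z \<bullet> du f z + \<nu> z \<bullet> pd b (du f) z = 0" "pd b \<nu> z \<bullet> dv f z + \<nu> z \<bullet> pd b (dv f) z = 0"
    "pd b \<nu> z \<bullet> \<xi> z + \<nu> z \<bullet> pd b \<xi> z = 0" for b
    using conormal by (auto intro!: pd_inner_eq_const[OF open_U z smooth_conormal]
        smooth_frame smooth_\<xi>)
  from this[of False] this[of True] show
    "du \<nu> z \<bullet> du f z = - \<rho> z" "du \<nu> z \<bullet> dv f z = 0" "du \<nu> z \<bullet> \<xi> z = 0"
    "dv \<nu> z \<bullet> du f z = 0" "dv \<nu> z \<bullet> dv f z = - \<rho> z" "dv \<nu> z \<bullet> \<xi> z = 0"
    using conormal_second_fundamental[OF z] by (simp_all add: add_eq_0_iff)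
qed

lemma conormal_second_derivatives:
  assumes z: "z \<in> U"
  shows "du (du \<nu>) z \<bullet> \<xi> z = - b11 z * \<rho> z" "dv (du \<nu>) z \<bullet> \<xi> z = - b12 z * \<rho> z"
    "dv (dv \<nu>) z \<bullet> \<xi> z = - b22 z * \<rho> z"
proof -
  have "pd b (pd b' \<nu>) z \<bullet> \<xi> z + pd b' \<nu> z \<bullet> pd b \<xi> z = 0" for b b'
    using conormal_derivatives(3,6)
    by (cases b') (auto intro!: pd_inner_eq_const[OF open_U z] smooth2_on_pd smooth_conormal smooth_\<xi>)
  from this[of False False] this[of True False] this[of True True] show
    "du (du \<nu>) z \<bullet> \<xi> z = - b11 z * \<rho> z" "dv (du \<nu>) z \<bullet> \<xi> z = - b12 z * \<rho> z"
    "dv (dv \<nu>) z \<bullet> \<xi> z = - b22 z * \<rho> z"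
    using conormal_derivatives[OF z]
    by (simp_all add: Weingarten_u[OF z] Weingarten_v[OF z] inner_diff_right add_eq_0_iff)
qed

lemma delta_eq_\<rho>:
  assumes z: "z \<in> U"
  shows "frame_det z * bracket3 (\<nu> z) (du \<nu> z) (dv \<nu> z) / \<rho> z = \<rho> z"
proof -
  have dual: "frame_det z *\<^sub>R \<nu> z = cross3 (du f z) (dv f z)"
    "frame_det z *\<^sub>R du \<nu> z = - \<rho> z *\<^sub>R cross3 (dv f z) (\<xi> z)"
    "frame_det z *\<^sub>R dv \<nu> z = - \<rho> z *\<^sub>R cross3 (\<xi> z) (du f z)"
    using bracket3_scaleR_expansion[of "du f z" "dv f z" "\<xi> z"] conormal[OF z] conormal_derivatives[OF z]
    by simp_all
  have "frame_det z ^ 3 * bracket3 (\<nu> z) (du \<nu> z) (dv \<nu> z)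
      = bracket3 (frame_det z *\<^sub>R \<nu> z) (frame_det z *\<^sub>R du \<nu> z) (frame_det z *\<^sub>R dv \<nu> z)"
    by (simp add: bracket3_linear power3_eq_cube)
  also have "\<dots> = \<rho> z ^ 2 * bracket3 (cross3 (du f z) (dv f z)) (cross3 (dv f z) (\<xi> z)) (cross3 (\<xi> z) (du f z))"
    unfolding dual by (simp add: bracket3_linear power2_eq_square)
  also have "\<dots> = \<rho> z ^ 2 * frame_det z ^ 2"
    by (simp add: bracket3_cross3)
  finally show ?thesis
    using transversal[OF z] \<rho>_pos[OF z] by (simp add: power3_eq_cube power2_eq_square field_simps)
qed

lemma support_function_second_derivatives:
  fixes q :: "real^3"
  assumes z: "z \<in> U"
  defines "p \<equiv> \<lambda>w. \<nu> w \<bullet> (f w - q)"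
  shows "du (du p) z = du (du \<nu>) z \<bullet> (f z - q) - \<rho> z" "dv (du p) z = dv (du \<nu>) z \<bullet> (f z - q)"
    "dv (dv p) z = dv (dv \<nu>) z \<bullet> (f z - q) - \<rho> z"
proof -
  have f_q: "smooth2_on U (\<lambda>w. f w - q)"
    by (rule smooth2_on_diff[OF open_U smooth_f smooth2_on_const])
  have pd_p: "pd b (\<lambda>w. X w \<bullet> (f w - q)) w = pd b X w \<bullet> (f w - q) + X w \<bullet> pd b f w"
    if "smooth2_on U X" "w \<in> U" for X b w
    using pd_bilinear[OF bounded_bilinear_inner smooth2_on_differentiable[OF that]
        smooth2_on_differentiable[OF f_q that(2)]]
      pd_diff_const[OF smooth2_on_differentiable[OF smooth_f that(2)]] by simp
  have p1: "pd b p w = pd b \<nu> w \<bullet> (f w - q)" if "w \<in> U" for b w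
    using pd_p[OF smooth_conormal that] conormal[OF that] unfolding p_def by (cases b) simp_all
  have "pd b' (pd b p) z = pd b' (pd b \<nu>) z \<bullet> (f z - q) + pd b \<nu> z \<bullet> pd b' f z" for b b'
  proof -
    have "pd b' (pd b p) z = pd b' (\<lambda>w. pd b \<nu> w \<bullet> (f w - q)) z"
      using pd_cong_open[OF open_U z p1] .
    also have "\<dots> = pd b' (pd b \<nu>) z \<bullet> (f z - q) + pd b \<nu> z \<bullet> pd b' f z"
      by (rule pd_p[OF smooth2_on_pd[OF smooth_conormal] z])
    finally show ?thesis .
  qed
  then show "du (du p) z = du (du \<nu>) z \<bullet> (f z - q) - \<rho> z" "dv (du p) z = dv (du \<nu>) z \<bullet> (f z - q)"
    "dv (dv p) z = dv (dv \<nu>) z \<bullet> (f z - q) - \<rho> z"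
    using conormal_derivatives[OF z] by simp_all
qed

lemma Codazzi:
  assumes z: "z \<in> U"
  shows "frame_det z * (dv b11 z - du b12 z) = (b11 z - b22 z) * - bracket3 (dv (du f) z) (dv f z) (\<xi> z)
      + b12 z * (bracket3 (du (du f) z) (dv f z) (\<xi> z) - bracket3 (dv (dv f) z) (dv f z) (\<xi> z))"
    "frame_det z * (du b22 z - dv b12 z) = (b11 z - b22 z) * bracket3 (du f z) (dv (du f) z) (\<xi> z)
      + b12 z * (bracket3 (du f z) (dv (dv f) z) (\<xi> z) - bracket3 (du f z) (du (du f) z) (\<xi> z))"
proof -
  have \<xi>_uv: "dv (du \<xi>) z = - (dv b11 z *\<^sub>R du f z + b11 z *\<^sub>R dv (du f) z)
      - (dv b12 z *\<^sub>R dv f z + b12 z *\<^sub>R dv (dv f) z)"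
    by (rule pd_neg_scaleR_combination[OF open_U z Weingarten_u smooth_shape_operator(1,2) smooth_frame(1,2)])
  moreover have \<xi>_vu: "du (dv \<xi>) z = - (du b12 z *\<^sub>R du f z + b12 z *\<^sub>R du (du f) z)
      - (du b22 z *\<^sub>R dv f z + b22 z *\<^sub>R dv (du f) z)"
    using pd_neg_scaleR_combination[OF open_U z Weingarten_v smooth_shape_operator(2,3) smooth_frame(1,2)]
      schwarz[OF open_U smooth_f z] by simp
  moreover have "dv (du \<xi>) z = du (dv \<xi>) z"
    by (rule schwarz[OF open_U smooth_\<xi> z])
  ultimately have "bracket3 (dv (du \<xi>) z) (dv f z) (\<xi> z) = bracket3 (du (dv \<xi>) z) (dv f z) (\<xi> z)"
    "bracket3 (du f z) (dv (du \<xi>) z) (\<xi> z) = bracket3 (du f z) (du (dv \<xi>) z) (\<xi> z)"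
    by simp_all
  then show "frame_det z * (dv b11 z - du b12 z) = (b11 z - b22 z) * - bracket3 (dv (du f) z) (dv f z) (\<xi> z)
      + b12 z * (bracket3 (du (du f) z) (dv f z) (\<xi> z) - bracket3 (dv (dv f) z) (dv f z) (\<xi> z))"
    "frame_det z * (du b22 z - dv b12 z) = (b11 z - b22 z) * bracket3 (du f z) (dv (du f) z) (\<xi> z)
      + b12 z * (bracket3 (du f z) (dv (dv f) z) (\<xi> z) - bracket3 (du f z) (du (du f) z) (\<xi> z))"
    unfolding \<xi>_uv \<xi>_vu by (simp_all add: bracket3_linear algebra_simps)
qed

lemma Codazzi_coefficients:
  obtains X1 X2 Y1 Y2 where "smooth2_on U X1" "smooth2_on U X2" "smooth2_on U Y1" "smooth2_on U Y2"
    "\<And>z. z \<in> U \<Longrightarrow> dv b11 z - du b12 z = (b11 z - b22 z) * X1 z + b12 z * X2 z"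
    "\<And>z. z \<in> U \<Longrightarrow> du b22 z - dv b12 z = (b11 z - b22 z) * Y1 z + b12 z * Y2 z"
proof
  let ?X1 = "\<lambda>z. - bracket3 (dv (du f) z) (dv f z) (\<xi> z) / frame_det z"
  let ?X2 = "\<lambda>z. (bracket3 (du (du f) z) (dv f z) (\<xi> z) - bracket3 (dv (dv f) z) (dv f z) (\<xi> z)) / frame_det z"
  let ?Y1 = "\<lambda>z. bracket3 (du f z) (dv (du f) z) (\<xi> z) / frame_det z"
  let ?Y2 = "\<lambda>z. (bracket3 (du f z) (dv (dv f) z) (\<xi> z) - bracket3 (du f z) (du (du f) z) (\<xi> z)) / frame_det z"
  show "smooth2_on U ?X1" "smooth2_on U ?X2" "smooth2_on U ?Y1" "smooth2_on U ?Y2"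
    by (intro smooth_divide_frame_det smooth2_on_minus smooth2_on_diff smooth2_on_bracket3 open_U
        smooth_frame smooth_\<xi>)+
  show "dv b11 z - du b12 z = (b11 z - b22 z) * ?X1 z + b12 z * ?X2 z"
    "du b22 z - dv b12 z = (b11 z - b22 z) * ?Y1 z + b12 z * ?Y2 z" if "z \<in> U" for z
  proof -
    have solve: "L = a * (P / D) + b * (Q / D)" if "D \<noteq> 0" "D * L = a * P + b * Q" for L a b P Q D :: real
      using that by (simp add: field_simps)
    show "dv b11 z - du b12 z = (b11 z - b22 z) * ?X1 z + b12 z * ?X2 z"
      "du b22 z - dv b12 z = (b11 z - b22 z) * ?Y1 z + b12 z * ?Y2 z"
      using solve[OF transversal[OF that] Codazzi(1)[OF that]] solve[OF transversal[OF that] Codazzi(2)[OF that]]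
      by simp_all
  qed
qed

lemma Codazzi_differences_vanish:
  assumes z0: "z0 \<in> U"
    and d: "vanishes_to_order z0 k (\<lambda>z. b11 z - b22 z)" and e: "vanishes_to_order z0 k b12"
  shows "vanishes_to_order z0 k (\<lambda>z. dv b11 z - du b12 z)" "vanishes_to_order z0 k (\<lambda>z. du b22 z - dv b12 z)"
proof -
  note U = open_U z0 and sm = smooth_shape_operator
  obtain X1 X2 Y1 Y2 where X: "smooth2_on U X1" "smooth2_on U X2" "smooth2_on U Y1" "smooth2_on U Y2"
    and C: "\<And>z. z \<in> U \<Longrightarrow> dv b11 z - du b12 z = (b11 z - b22 z) * X1 z + b12 z * X2 z"
      "\<And>z. z \<in> U \<Longrightarrow> du b22 z - dv b12 z = (b11 z - b22 z) * Y1 z + b12 z * Y2 z"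
    using Codazzi_coefficients by blast
  have comb: "vanishes_to_order z0 k (\<lambda>z. (b11 z - b22 z) * X z + b12 z * Y z)"
    if "smooth2_on U X" "smooth2_on U Y" for X Y
    using d e that sm by (intro vanishes_to_order_combination[OF U] smooth2_on_diff open_U)
  show "vanishes_to_order z0 k (\<lambda>z. dv b11 z - du b12 z)" "vanishes_to_order z0 k (\<lambda>z. du b22 z - dv b12 z)"
    using vanishes_to_order_cong[OF U C(1)[symmetric] comb[OF X(1,2)]]
      vanishes_to_order_cong[OF U C(2)[symmetric] comb[OF X(3,4)]] by simp_all
qed

lemma shape_operator_derivatives_vanish:
  assumes z0: "z0 \<in> U"
    and d: "vanishes_to_order z0 (Suc k) (\<lambda>z. b11 z - b22 z)" and e: "vanishes_to_order z0 (Suc k) b12"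
  shows "vanishes_to_order z0 k (pd b b11)" "vanishes_to_order z0 k (pd b b22)"
proof -
  note U = open_U z0 and sm = smooth2_on_pd[OF smooth_shape_operator(1)]
    smooth2_on_pd[OF smooth_shape_operator(2)] smooth2_on_pd[OF smooth_shape_operator(3)]
  have sm_diff: "smooth2_on U (\<lambda>z. pd b b11 z - pd b' b12 z)" "smooth2_on U (\<lambda>z. pd b b22 z - pd b' b12 z)"
    "smooth2_on U (\<lambda>z. pd b b11 z - pd b b22 z)" for b b'
    using sm by (simp_all add: smooth2_on_diff open_U)
  have e': "vanishes_to_order z0 k (pd b b12)" for b
    using e by (simp add: vanishes_to_order_Suc)
  have "vanishes_to_order z0 k (pd b (\<lambda>z. b11 z - b22 z))" for b
    using d by (simp add: vanishes_to_order_Suc)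
  then have d': "vanishes_to_order z0 k (\<lambda>z. pd b b11 z - pd b b22 z)" for b
    by (rule vanishes_to_order_cong[OF U, rotated])
      (use smooth_shape_operator in \<open>simp add: pd_diff smooth2_on_differentiable\<close>)
  have C: "vanishes_to_order z0 k (\<lambda>z. dv b11 z - du b12 z)" "vanishes_to_order z0 k (\<lambda>z. du b22 z - dv b12 z)"
    using Codazzi_differences_vanish[OF z0] d e vanishes_to_order_mono by (metis le_SucI order_refl)+
  have dv11: "vanishes_to_order z0 k (dv b11)"
    using vanishes_to_order_add[OF U sm_diff(1) sm(2) C(1) e'[of False]] by simp
  have du22: "vanishes_to_order z0 k (du b22)"
    using vanishes_to_order_add[OF U sm_diff(2) sm(2) C(2) e'[of True]] by simp
  have du11: "vanishes_to_order z0 k (du b11)"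
    using vanishes_to_order_add[OF U sm(3) sm_diff(3) du22 d'[of False]] by simp
  have dv22: "vanishes_to_order z0 k (dv b22)"
    using vanishes_to_order_diff[OF U sm(1) sm_diff(3) dv11 d'[of True]] by simp
  show "vanishes_to_order z0 k (pd b b11)" "vanishes_to_order z0 k (pd b b22)"
    using du11 dv11 du22 dv22 by (cases b; simp)+
qed

lemma shape_operator_vanishes:
  assumes z0: "z0 \<in> U"
    and d: "vanishes_to_order z0 k (\<lambda>z. b11 z - b22 z)" and e: "vanishes_to_order z0 k b12"
  shows "vanishes_to_order z0 k (\<lambda>z. b11 z - b11 z0)" "vanishes_to_order z0 k (\<lambda>z. b22 z - b11 z0)"
proof -
  have "vanishes_to_order z0 k (\<lambda>z. b11 z - b11 z0) \<and> vanishes_to_order z0 k (\<lambda>z. b22 z - b11 z0)"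
  proof (cases k)
    case (Suc k')
    then have "b22 z0 = b11 z0"
      using d by (simp add: vanishes_to_order_Suc)
    then show ?thesis
      using shape_operator_derivatives_vanish[OF z0] d e
      unfolding Suc by (simp add: vanishes_to_order_Suc_diff_const[OF open_U z0] smooth_shape_operator)
  qed simp
  then show "vanishes_to_order z0 k (\<lambda>z. b11 z - b11 z0)" "vanishes_to_order z0 k (\<lambda>z. b22 z - b11 z0)"
    by simp_all
qed

lemma focal_map_vanishes:
  assumes z0: "z0 \<in> U" and lam: "b11 z0 \<noteq> 0"
    and d: "vanishes_to_order z0 k (\<lambda>z. b11 z - b22 z)" and e: "vanishes_to_order z0 k b12"
  defines "F \<equiv> \<lambda>z. f z + (1 / b11 z0) *\<^sub>R \<xi> z"
  shows "vanishes_to_order z0 (Suc k) (\<lambda>z. F z - F z0)"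
proof -
  note U = open_U z0 and sm = smooth_shape_operator
  have sm_F: "smooth2_on U F"
    unfolding F_def by (intro smooth2_on_add smooth2_on_scaleR smooth2_on_const open_U smooth_f smooth_\<xi>)
  have sm_lam: "smooth2_on U (\<lambda>z. b11 z - b11 z0)" "smooth2_on U (\<lambda>z. b22 z - b11 z0)"
    using sm by (simp_all add: smooth2_on_diff smooth2_on_const open_U)
  note lam_vanish = shape_operator_vanishes[OF z0 d e]
  have pd_F: "pd b F z = pd b f z + (1 / b11 z0) *\<^sub>R pd b \<xi> z" if "z \<in> U" for b z
    using that smooth_f smooth_\<xi> smooth2_on_scaleR[OF open_U smooth2_on_const smooth_\<xi>]
    unfolding F_def by (simp add: pd_add pd_scaleR_const smooth2_on_differentiable)
  have comb: "vanishes_to_order z0 k (\<lambda>z. (- 1 / b11 z0) *\<^sub>R (a z *\<^sub>R du f z + c z *\<^sub>R dv f z))"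
    if "smooth2_on U a" "smooth2_on U c" "vanishes_to_order z0 k a" "vanishes_to_order z0 k c" for a c
    using that smooth_frame
    by (intro vanishes_to_order_scaleR_const[OF U] vanishes_to_order_add[OF U] smooth2_on_add
        smooth2_on_scaleR open_U vanishes_to_order_bilinear_right[OF bounded_bilinear_scaleR U])
  have "vanishes_to_order z0 k (pd b F)" for b
  proof (cases b)
    case False
    show ?thesis
      by (rule vanishes_to_order_cong[OF U _ comb[OF sm_lam(1) sm(2) lam_vanish(1) e]])
        (use lam in \<open>simp add: False pd_F Weingarten_u algebra_simps\<close>)
  next
    case True
    show ?thesis
      by (rule vanishes_to_order_cong[OF U _ comb[OF sm(2) sm_lam(2) e lam_vanish(2)]])
        (use lam in \<open>simp add: True pd_F Weingarten_v algebra_simps\<close>)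
  qed
  then show ?thesis
    by (simp add: vanishes_to_order_Suc_diff_const[OF U sm_F])
qed

lemma support_function_normal_form:
  fixes lam :: real and q0 :: "real^3"
  assumes z: "z \<in> U" and lam: "lam \<noteq> 0"
  defines "p \<equiv> \<lambda>w. \<nu> w \<bullet> (f w - q0)" and "F \<equiv> \<lambda>w. f w + (1 / lam) *\<^sub>R \<xi> w - q0"
  shows "(du (du p) z - dv (dv p) z, 2 * dv (du p) z) - (c / lam) *\<^sub>R (b11 z - b22 z, 2 * b12 z)
    = ((du (du \<nu>) z - dv (dv \<nu>) z) \<bullet> F z, (2 *\<^sub>R dv (du \<nu>) z) \<bullet> F z)
      + ((\<rho> z - c) / lam) *\<^sub>R (b11 z - b22 z, 2 * b12 z)"
proof -
  have fq: "f z - q0 = F z - (1 / lam) *\<^sub>R \<xi> z"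
    by (simp add: F_def)
  have p: "du (du p) z = du (du \<nu>) z \<bullet> (f z - q0) - \<rho> z" "dv (du p) z = dv (du \<nu>) z \<bullet> (f z - q0)"
    "dv (dv p) z = dv (dv \<nu>) z \<bullet> (f z - q0) - \<rho> z"
    unfolding p_def by (rule support_function_second_derivatives[OF z])+
  show ?thesis
    unfolding p fq using conormal_second_derivatives[OF z] lam
    by (simp add: inner_diff_left inner_diff_right field_simps)
qed

lemma support_function_vanishes:
  assumes z0: "z0 \<in> U" and lam: "b11 z0 \<noteq> 0"
    and B: "vanishes_to_order z0 k (\<lambda>z. (b11 z - b22 z, 2 * b12 z))"
  defines "p \<equiv> \<lambda>z. \<nu> z \<bullet> (f z - (f z0 + (1 / b11 z0) *\<^sub>R \<xi> z0))"
  shows "vanishes_to_order z0 (Suc k) (\<lambda>z. (du (du p) z - dv (dv p) z, 2 * dv (du p) z)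
    - (\<rho> z0 / b11 z0) *\<^sub>R (b11 z - b22 z, 2 * b12 z))"
proof -
  note U = open_U z0 and sm = smooth_shape_operator
  define F where "F = (\<lambda>z. f z + (1 / b11 z0) *\<^sub>R \<xi> z - (f z0 + (1 / b11 z0) *\<^sub>R \<xi> z0))"
  have sm_d: "smooth2_on U (\<lambda>z. b11 z - b22 z)" and sm_2e: "smooth2_on U (\<lambda>z. 2 * b12 z)"
    using sm by (simp_all add: smooth2_on_diff smooth2_on_mult smooth2_on_const open_U)
  have d: "vanishes_to_order z0 k (\<lambda>z. b11 z - b22 z)" and "vanishes_to_order z0 k (\<lambda>z. 2 * b12 z)"
    using B vanishes_to_order_Pair_iff[OF U sm_d sm_2e] by simp_all
  from vanishes_to_order_scaleR_const[OF U sm_2e this(2), of "1 / 2"]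
  have e: "vanishes_to_order z0 k b12"
    by simp
  have F: "vanishes_to_order z0 (Suc k) F"
    using focal_map_vanishes[OF z0 lam d e] by (simp add: F_def)
  have sm_F: "smooth2_on U F"
    unfolding F_def by (intro smooth2_on_diff smooth2_on_add smooth2_on_scaleR smooth2_on_const
        open_U smooth_f smooth_\<xi>)
  have sm_\<nu>: "smooth2_on U (\<lambda>z. du (du \<nu>) z - dv (dv \<nu>) z)" "smooth2_on U (\<lambda>z. 2 *\<^sub>R dv (du \<nu>) z)"
    using smooth2_on_pd[OF smooth2_on_pd[OF smooth_conormal]]
    by (simp_all add: smooth2_on_diff smooth2_on_scaleR[OF open_U smooth2_on_const] open_U)
  have sm_c: "smooth2_on U (\<lambda>z. (\<rho> z - \<rho> z0) / b11 z0)"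
    using smooth2_on_mult[OF open_U smooth2_on_diff[OF open_U smooth_\<rho> smooth2_on_const] smooth2_on_const,
        of "\<rho> z0" "1 / b11 z0"] by simp
  have sm_B: "smooth2_on U (\<lambda>z. (b11 z - b22 z, 2 * b12 z))"
    by (rule smooth2_on_Pair[OF open_U sm_d sm_2e])
  have sm_1: "smooth2_on U (\<lambda>z. ((du (du \<nu>) z - dv (dv \<nu>) z) \<bullet> F z, (2 *\<^sub>R dv (du \<nu>) z) \<bullet> F z))"
    by (rule smooth2_on_Pair[OF open_U smooth2_on_inner[OF open_U sm_\<nu>(1) sm_F]
          smooth2_on_inner[OF open_U sm_\<nu>(2) sm_F]])
  have "vanishes_to_order z0 (Suc k) (\<lambda>z. ((du (du \<nu>) z - dv (dv \<nu>) z) \<bullet> F z, (2 *\<^sub>R dv (du \<nu>) z) \<bullet> F z))"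
    using vanishes_to_order_Pair_iff[OF U smooth2_on_inner[OF open_U sm_\<nu>(1) sm_F]
        smooth2_on_inner[OF open_U sm_\<nu>(2) sm_F]]
      vanishes_to_order_bilinear_left[OF bounded_bilinear_inner U sm_\<nu>(1) sm_F F]
      vanishes_to_order_bilinear_left[OF bounded_bilinear_inner U sm_\<nu>(2) sm_F F] by blast
  moreover have "vanishes_to_order z0 (Suc 0 + k) (\<lambda>z. ((\<rho> z - \<rho> z0) / b11 z0) *\<^sub>R (b11 z - b22 z, 2 * b12 z))"
    by (rule vanishes_to_order_bilinear[OF bounded_bilinear_scaleR U sm_c sm_B _ B])
      (simp add: vanishes_to_order_Suc)
  ultimately have "vanishes_to_order z0 (Suc k) (\<lambda>z.
      ((du (du \<nu>) z - dv (dv \<nu>) z) \<bullet> F z, (2 *\<^sub>R dv (du \<nu>) z) \<bullet> F z)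
      + ((\<rho> z - \<rho> z0) / b11 z0) *\<^sub>R (b11 z - b22 z, 2 * b12 z))"
    using vanishes_to_order_add[OF U sm_1 smooth2_on_scaleR[OF open_U sm_c sm_B]] by simp
  then show ?thesis
    unfolding F_def p_def
    by (rule vanishes_to_order_cong[OF U, rotated]) (rule support_function_normal_form[OF _ lam, symmetric])
qed

lemma support_function_jet:
  assumes z0: "z0 \<in> U" and lam: "b11 z0 \<noteq> 0" and k: "k \<ge> 1"
    and B: "jet_eq z0 (k - 1) (\<lambda>z. (b11 z - b22 z, 2 * b12 z)) (\<lambda>z. (0, 0))"
  defines "p \<equiv> \<lambda>z. \<nu> z \<bullet> (f z - (f z0 + (1 / b11 z0) *\<^sub>R \<xi> z0))"
  shows "jet_eq z0 k (\<lambda>z. (du (du p) z - dv (dv p) z, 2 * dv (du p) z))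
    (\<lambda>z. (\<rho> z0 / b11 z0) *\<^sub>R (b11 z - b22 z, 2 * b12 z))"
proof -
  note U = open_U z0
  have sm_B: "smooth2_on U (\<lambda>z. (b11 z - b22 z, 2 * b12 z))"
    using smooth_shape_operator
    by (intro smooth2_on_Pair smooth2_on_diff smooth2_on_mult smooth2_on_const open_U)
  have sm_P: "smooth2_on U (\<lambda>z. (du (du p) z - dv (dv p) z, 2 * dv (du p) z))"
    unfolding p_def using smooth_conormal smooth_f smooth_\<xi>
    by (intro smooth2_on_Pair smooth2_on_diff smooth2_on_mult smooth2_on_const smooth2_on_pd
        smooth2_on_inner smooth2_on_add smooth2_on_scaleR open_U)
  have "vanishes_to_order z0 k (\<lambda>z. (b11 z - b22 z, 2 * b12 z))"
    using B k jet_eq_iff_vanishes_to_order[OF U sm_B smooth2_on_const] by (simp add: zero_prod_def)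
  then show ?thesis
    by (subst jet_eq_iff_vanishes_to_order[OF U sm_P smooth2_on_scaleR[OF open_U smooth2_on_const sm_B]])
      (unfold p_def, rule support_function_vanishes[OF z0 lam])
qed

end

theorem proposition4p4:
  fixes U :: "(real \<times> real) set"
    and f \<xi> \<nu> :: "real \<times> real \<Rightarrow> real^3"
    and \<rho> b11 b12 b22 :: "real \<times> real \<Rightarrow> real"
    and \<Gamma>11u \<Gamma>11v \<Gamma>12u \<Gamma>12v \<Gamma>22u \<Gamma>22v :: "real \<times> real \<Rightarrow> real"
    and k :: nat
  assumes U_open: "open U" and U0: "(0, 0) \<in> U"
    and f_smooth: "smooth2_on U f" and \<xi>_smooth: "smooth2_on U \<xi>"
    \<comment> \<open>transversality of \<xi> (in particular f is an immersion)\<close>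
    and transversal: "\<And>z. z \<in> U \<Longrightarrow> bracket3 (du f z) (dv f z) (\<xi> z) \<noteq> 0"
    \<comment> \<open>structure equations D_X f_* Y = f_*(nabla_X Y) + h(X,Y) xi in isothermal coordinates:
        h(du,du) = h(dv,dv) = rho, h(du,dv) = 0\<close>
    and Gauss_uu: "\<And>z. z \<in> U \<Longrightarrow> du (du f) z = \<Gamma>11u z *\<^sub>R du f z + \<Gamma>11v z *\<^sub>R dv f z + \<rho> z *\<^sub>R \<xi> z"
    and Gauss_uv: "\<And>z. z \<in> U \<Longrightarrow> dv (du f) z = \<Gamma>12u z *\<^sub>R du f z + \<Gamma>12v z *\<^sub>R dv f z"
    and Gauss_vv: "\<And>z. z \<in> U \<Longrightarrow> dv (dv f) z = \<Gamma>22u z *\<^sub>R du f z + \<Gamma>22v z *\<^sub>R dv f z + \<rho> z *\<^sub>R \<xi> z"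
    \<comment> \<open>h positive definite\<close>
    and \<rho>_pos: "\<And>z. z \<in> U \<Longrightarrow> \<rho> z > 0"
    \<comment> \<open>equiaffine (tau = 0) Weingarten equations defining the shape operator B\<close>
    and Weingarten_u: "\<And>z. z \<in> U \<Longrightarrow> du \<xi> z = - (b11 z *\<^sub>R du f z) - b12 z *\<^sub>R dv f z"
    and Weingarten_v: "\<And>z. z \<in> U \<Longrightarrow> dv \<xi> z = - (b12 z *\<^sub>R du f z) - b22 z *\<^sub>R dv f z"
    \<comment> \<open>co-normal\<close>
    and conormal: "\<And>z. z \<in> U \<Longrightarrow> \<nu> z \<bullet> du f z = 0 \<and> \<nu> z \<bullet> dv f z = 0 \<and> \<nu> z \<bullet> \<xi> z = 1"
    \<comment> \<open>(0,0) is an umbilical point of order at least k\<close>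
    and k_pos: "k \<ge> 1"
    and umbilic: "b11 (0, 0) = b22 (0, 0)" "b12 (0, 0) = 0"
    and order_k: "jet_eq (0, 0) (k - 1) (\<lambda>z. (b11 z - b22 z, 2 * b12 z)) (\<lambda>z. (0, 0))"
    and lam0_nz: "b11 (0, 0) \<noteq> 0"
  shows "let lam0 = b11 (0, 0);
             q0 = f (0, 0) + (1 / lam0) *\<^sub>R \<xi> (0, 0);
             p = (\<lambda>z. \<nu> z \<bullet> (f z - q0));
             PP = (\<lambda>z. (du (du p) z - dv (dv p) z, 2 * dv (du p) z));
             BB = (\<lambda>z. (b11 z - b22 z, 2 * b12 z));
             \<delta> = (\<lambda>z. bracket3 (du f z) (dv f z) (\<xi> z) * bracket3 (\<nu> z) (du \<nu> z) (dv \<nu> z) / \<rho> z);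
             \<delta>0 = \<delta> (0, 0)
         in jet_eq (0, 0) k PP (\<lambda>z. (\<delta>0 / lam0) *\<^sub>R BB z)"
proof -
  interpret equiaffine_chart U f \<xi> \<nu> \<rho> b11 b12 b22 \<Gamma>11u \<Gamma>11v \<Gamma>12u \<Gamma>12v \<Gamma>22u \<Gamma>22v
    by unfold_locales (fact assms)+
  show ?thesis
    using support_function_jet[OF U0 lam0_nz k_pos order_k] delta_eq_\<rho>[OF U0]
    unfolding Let_def by simp
qed

end
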